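(* Let $X$ be a finite nonempty set and put $p=2|X|-1$. Let $t,k\geq 0$ be integers and let $g\in\mathrm{FG}(X)$ have reduced length $t$. Then the number of elements $(T,g)\in \mathrm{FIM}(X)$ (with this fixed $g$) having exactly $k$ branch edges equals $R_{p,q}(k)$, where $q=2p+(t-1)(p-1)$.
   Context: $\mathrm{FG}(X)$ is the free group on $X$. $\Gamma_X$ is the Cayley graph of $\mathrm{FG}(X)$ with respect to $X$: its vertices are the elements of $\mathrm{FG}(X)$, with an edge from $h$ to $hx$ for each $h$ and each $x\in X$. Elements of the free inverse monoid $\mathrm{FIM}(X)$ are identified (Munn's model) with pairs $(T,g)$, where $T$ is a finite connected subgraph of $\Gamma_X$ containing the vertex $1$ and $g$ is a vertex of $T$. The trunk of $(T,g)$ is the unique geodesic in $T$ from $1$ to $g$. Branch edges are the edges of $T$ not on the trunk. The Fuss–Catalan number is $R_{p,q}(k)=\frac{q}{kp+q}\binom{kp+q}{k}$. *)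

theory Defs
  imports Complex_Main
begin

text \<open>Free group FG(X) on a set X: reduced words over letters (x, b), where
  (x, True) stands for x and (x, False) for x^-1.  The empty word is 1.\<close>

type_synonym 'a fg_word = "('a \<times> bool) list"

fun reduced :: "'a fg_word \<Rightarrow> bool" where
  "reduced [] = True"
| "reduced [l] = True"
| "reduced (l1 # l2 # w) = ((fst l1 \<noteq> fst l2 \<or> snd l1 = snd l2) \<and> reduced (l2 # w))"

definition FG :: "'a set \<Rightarrow> 'a fg_word set" where
  "FG X = {w. set (map fst w) \<subseteq> X \<and> reduced w}"

definition mult_gen :: "'a fg_word \<Rightarrow> 'a \<Rightarrow> 'a fg_word" where
  "mult_gen h x = (if h \<noteq> [] \<and> last h = (x, False) then butlast h else h @ [(x, True)])"

text \<open>Edges of the Cayley graph Gamma_X: the edge (h, x) goes from h to h x.\<close>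
definition cayley_edges :: "'a set \<Rightarrow> ('a fg_word \<times> 'a) set" where
  "cayley_edges X = {(h, x). h \<in> FG X \<and> x \<in> X}"

definition adj :: "('a fg_word \<times> 'a) set \<Rightarrow> 'a fg_word \<Rightarrow> 'a fg_word \<Rightarrow> bool" where
  "adj E u v \<longleftrightarrow> (\<exists>x. (u, x) \<in> E \<and> v = mult_gen u x) \<or> (\<exists>x. (v, x) \<in> E \<and> u = mult_gen v x)"

definition munn_tree :: "'a set \<Rightarrow> 'a fg_word set \<Rightarrow> ('a fg_word \<times> 'a) set \<Rightarrow> bool" where
  "munn_tree X V E \<longleftrightarrow>
     V \<subseteq> FG X \<and> E \<subseteq> cayley_edges X \<and> finite V \<and> finite E \<and> [] \<in> V \<and>
     (\<forall>(h, x) \<in> E. h \<in> V \<and> mult_gen h x \<in> V) \<and>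
     (\<forall>v \<in> V. (([] :: 'a fg_word), v) \<in> {(u, w). adj E u w}\<^sup>*)"

text \<open>Edges of the geodesic in Gamma_X from 1 to a reduced word g (the path through the
  prefixes of g).  Since Gamma_X is a tree, for any Munn tree (T, g) this is the trunk.\<close>
definition trunk_edges :: "'a fg_word \<Rightarrow> ('a fg_word \<times> 'a) set" where
  "trunk_edges g = (\<lambda>i. if snd (g ! i) then (take i g, fst (g ! i))
                        else (take (Suc i) g, fst (g ! i))) ` {..<length g}"

definition fuss_catalan :: "nat \<Rightarrow> nat \<Rightarrow> nat \<Rightarrow> real" where
  "fuss_catalan p q k = real q / real (k * p + q) * real ((k * p + q) choose k)"

end

theory Submission
  imports Defs "HOL-Library.Sublist"
begin

text \<open>The Cayley graph Gamma_X is a tree whose vertices are the reduced words, so a finite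
  connected subgraph T containing 1 is determined by its vertex set V: this set is closed under
  taking prefixes, and the edges of T are the edges joining each w in V - {1} to its parent
  butlast w. Requiring g in V means that V contains all prefixes of g, and the branch edges
  correspond to the vertices of V off the trunk. These vertices form a forest whose roots lie
  among the q = 2|X| + t(2|X| - 2) neighbours of the trunk that are not on it, inside a tree in
  which every vertex has p = 2|X| - 1 children. Deciding whether one given root is used yields
  N(q + 1, k + 1) = N(q, k + 1) + N(q + p, k) for the number N(q, k) of such forests with k
  vertices, which is the recurrence satisfied by the Fuss-Catalan numbers.\<close>

section \<open>Fuss-Catalan numbers\<close>

text \<open>The number of forests with k vertices, rooted at some of q given vertices, in a tree in
  which every vertex has p children.\<close>

fun forest_number :: "nat \<Rightarrow> nat \<Rightarrow> nat \<Rightarrow> nat" where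
  "forest_number p q 0 = 1"
| "forest_number p 0 (Suc k) = 0"
| "forest_number p (Suc q) (Suc k) = forest_number p q (Suc k) + forest_number p (q + p) k"

lemma fuss_catalan_Suc_Suc:
  assumes "p \<ge> 1"
  shows "fuss_catalan p (Suc q) (Suc k) = fuss_catalan p q (Suc k) + fuss_catalan p (q + p) k"
proof -
  define m where "m = Suc k * p + q"
  have "Suc k \<le> Suc k * p" using mult_le_mono2[OF assms, of "Suc k"] by simp
  then have "k < m" unfolding m_def by linarith
  define B where "B = real (m choose k)"
  define C where "C = real (Suc m choose Suc k)"
  have up: "real (Suc k) * C = real (Suc m) * B"
    unfolding B_def C_def of_nat_mult[symmetric] Suc_times_binomial ..
  have down: "real (Suc k) * real (m choose Suc k) = real (m - k) * B"
    unfolding B_def of_nat_mult[symmetric] binomial_absorption binomial_absorb_comp ..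
  have weights: "real q * real (m - k) + real (q + p) * real (Suc k) = real (Suc q) * real m"
    using \<open>k < m\<close> by (simp add: m_def algebra_simps)
  have "real (Suc k) * (real q / real m * real (m choose Suc k) + real (q + p) / real m * B)
      = (real q * real (m - k) + real (q + p) * real (Suc k)) / real m * B"
    using down by (simp add: algebra_simps add_divide_distrib)
  also have "\<dots> = real (Suc q) * B"
    unfolding weights using \<open>k < m\<close> by simp
  also have "\<dots> = real (Suc q) / real (Suc m) * (real (Suc k) * C)"
    unfolding up by simp
  also have "\<dots> = real (Suc k) * (real (Suc q) / real (Suc m) * C)"
    by simp
  finally have "real q / real m * real (m choose Suc k) + real (q + p) / real m * B
      = real (Suc q) / real (Suc m) * C"
    by (rule mult_left_cancel[THEN iffD1, rotated]) simp
  moreover have "Suc k * p + Suc q = Suc m" "Suc k * p + q = m" "k * p + (q + p) = m"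
    by (simp_all add: m_def)
  ultimately show ?thesis unfolding fuss_catalan_def B_def C_def by (simp only:)
qed

text \<open>The case q = k = 0 is excluded because fuss_catalan p 0 0 = 0 / 0 = 0.\<close>

lemma forest_number_eq_fuss_catalan:
  assumes "p \<ge> 1" and "q > 0 \<or> k > 0"
  shows "real (forest_number p q k) = fuss_catalan p q k"
  using assms
proof (induction p q k rule: forest_number.induct)
  case (3 p q k)
  then show ?case using fuss_catalan_Suc_Suc[of p q k] by simp
qed (simp_all add: fuss_catalan_def)

section \<open>Reduced words and the edges of the Cayley graph\<close>

lemma reduced_snoc:
  "reduced (w @ [l]) \<longleftrightarrow> reduced w \<and> (w = [] \<or> fst (last w) \<noteq> fst l \<or> snd (last w) = snd l)"
  by (induction w rule: reduced.induct) auto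

lemma reduced_prefix: "reduced w \<Longrightarrow> prefix u w \<Longrightarrow> reduced u"
  by (induction w rule: rev_induct) (auto simp: reduced_snoc)

lemma FG_prefix: "w \<in> FG X \<Longrightarrow> prefix u w \<Longrightarrow> u \<in> FG X"
  unfolding FG_def using reduced_prefix set_mono_prefix by fastforce

lemma FG_butlast: "w \<in> FG X \<Longrightarrow> butlast w \<in> FG X"
  using FG_prefix prefixeq_butlast by blast

text \<open>(butlast w) x = w if the last letter of w is x, and w x = butlast w if it is x^-1.\<close>

definition parent_edge :: "'a fg_word \<Rightarrow> 'a fg_word \<times> 'a" where
  "parent_edge w = (if snd (last w) then (butlast w, fst (last w)) else (w, fst (last w)))"

lemma parent_edge_ends:
  assumes "w \<in> FG X" "w \<noteq> []"
  shows "{fst (parent_edge w), mult_gen (fst (parent_edge w)) (snd (parent_edge w))} = {butlast w, w}"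
proof (cases "snd (last w)")
  case True
  have "reduced (butlast w @ [last w])" using assms by (simp add: FG_def)
  then have "\<not> (butlast w \<noteq> [] \<and> last (butlast w) = (fst (last w), False))"
    using True by (auto simp: reduced_snoc)
  moreover have "w = butlast w @ [(fst (last w), True)]"
    using True assms(2) by (metis append_butlast_last_id prod.collapse)
  ultimately show ?thesis using True by (auto simp: parent_edge_def mult_gen_def)
next
  case False
  then have "last w = (fst (last w), False)" by (simp add: prod_eq_iff)
  then show ?thesis using False assms(2) by (auto simp: parent_edge_def mult_gen_def)
qed

lemma parent_edge_in_cayley_edges:
  assumes "w \<in> FG X" "w \<noteq> []"
  shows "parent_edge w \<in> cayley_edges X"
  using assms FG_butlast[OF assms(1)] by (auto simp: parent_edge_def cayley_edges_def FG_def)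

lemma cayley_edge_eq_parent_edge:
  assumes "(h, x) \<in> cayley_edges X"
  obtains w where "w \<in> FG X" "w \<noteq> []" "parent_edge w = (h, x)"
proof (cases "h \<noteq> [] \<and> last h = (x, False)")
  case True
  then show ?thesis using assms that[of h] by (auto simp: cayley_edges_def parent_edge_def)
next
  case False
  then have "h @ [(x, True)] \<in> FG X" using assms by (auto simp: cayley_edges_def FG_def reduced_snoc prod_eq_iff)
  then show ?thesis using that[of "h @ [(x, True)]"] by (simp add: parent_edge_def)
qed

lemma inj_on_parent_edge: "inj_on parent_edge (FG X - {[]})"
proof (rule inj_onI)
  fix v w assume v: "v \<in> FG X - {[]}" and w: "w \<in> FG X - {[]}" and "parent_edge v = parent_edge w"
  then have "{butlast v, v} = {butlast w, w}" using parent_edge_ends[of v X] parent_edge_ends[of w X] by auto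
  show "v = w"
  proof (rule ccontr)
    assume "v \<noteq> w"
    then have "butlast v = w \<and> v = butlast w"
      using \<open>{butlast v, v} = {butlast w, w}\<close> unfolding doubleton_eq_iff by blast
    then have "length (butlast v) = length w" "length v = length (butlast w)"
      by (elim conjE; simp only:)+
    moreover have "length v > 0" "length w > 0" using v w by auto
    ultimately show False by (simp only: length_butlast)
  qed
qed

lemma adj_iff_edge_ends: "adj E u v \<longleftrightarrow> (\<exists>h x. (h, x) \<in> E \<and> {h, mult_gen h x} = {u, v})"
  unfolding adj_def doubleton_eq_iff by blast

lemma adj_imp_parent_edge:
  assumes "E \<subseteq> cayley_edges X" "adj E u v"
  obtains w where "w \<in> FG X" "w \<noteq> []" "parent_edge w \<in> E" "{u, v} = {butlast w, w}"
proof -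
  obtain h x where hx: "(h, x) \<in> E" "{h, mult_gen h x} = {u, v}"
    using assms(2) unfolding adj_iff_edge_ends by metis
  obtain w where w: "w \<in> FG X" "w \<noteq> []" "parent_edge w = (h, x)"
    by (rule cayley_edge_eq_parent_edge[OF subsetD[OF assms(1) hx(1)]])
  have "parent_edge w \<in> E" using w(3) hx(1) by simp
  moreover have "{u, v} = {butlast w, w}" using parent_edge_ends[OF w(1,2)] w(3) hx(2) by simp
  ultimately show ?thesis by (rule that[OF w(1,2)])
qed

lemma adj_parent_edge:
  assumes "w \<in> FG X" "w \<noteq> []" "parent_edge w \<in> E"
  shows "adj E (butlast w) w"
  unfolding adj_iff_edge_ends
  using assms(3) parent_edge_ends[OF assms(1,2)]
  by (intro exI[of _ "fst (parent_edge w)"] exI[of _ "snd (parent_edge w)"]) simp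

section \<open>Munn trees as prefix-closed sets of reduced words\<close>

definition rooted_subtree :: "'a set \<Rightarrow> 'a fg_word set \<Rightarrow> bool" where
  "rooted_subtree X V \<longleftrightarrow>
     finite V \<and> V \<subseteq> FG X \<and> [] \<in> V \<and> (\<forall>w\<in>V. w \<noteq> [] \<longrightarrow> butlast w \<in> V)"

lemma rooted_subtree_prefix:
  assumes "rooted_subtree X V" "v \<in> V" "prefix u v"
  shows "u \<in> V"
  using assms(2,3)
proof (induction v rule: rev_induct)
  case (snoc l v)
  then have "v \<in> V" using assms(1) unfolding rooted_subtree_def by (metis butlast_snoc snoc_eq_iff_butlast)
  then show ?case using snoc by auto
qed simp

lemma reachable_imp_parent_edges:
  assumes "E \<subseteq> cayley_edges X" "([], v) \<in> {(u, w). adj E u w}\<^sup>*" "prefix w v" "w \<noteq> []"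
  shows "parent_edge w \<in> E"
  using assms(2-4)
proof (induction arbitrary: w rule: rtrancl_induct)
  case (step y z)
  obtain w' where w': "w' \<in> FG X" "w' \<noteq> []" "parent_edge w' \<in> E" "{y, z} = {butlast w', w'}"
    using adj_imp_parent_edge[OF assms(1)] step(2) by blast
  show ?case
  proof (cases "z = w'")
    case True
    then have "y = butlast w'" using w'(2,4) by (auto simp: doubleton_eq_iff)
    then have "w = w' \<or> prefix w y"
      using step(4) True w'(2) by (metis append_butlast_last_id prefix_snoc)
    then show ?thesis using step w' by blast
  next
    case False
    then have "z = butlast w'" "y = w'" using w'(4) by (auto simp: doubleton_eq_iff)
    then have "prefix w y" using step(4) prefixeq_butlast prefix_order.trans by blast
    then show ?thesis using step by blast
  qed
qed simp

lemma munn_tree_imp_rooted_subtree: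
  assumes "munn_tree X V E"
  shows "rooted_subtree X V" "E = parent_edge ` (V - {[]})"
proof -
  have E: "E \<subseteq> cayley_edges X" and V: "V \<subseteq> FG X"
    and ends: "\<And>h x. (h, x) \<in> E \<Longrightarrow> h \<in> V \<and> mult_gen h x \<in> V"
    using assms by (auto simp: munn_tree_def)
  have ends_parent: "butlast w \<in> V \<and> w \<in> V" if "w \<in> FG X" "w \<noteq> []" "parent_edge w \<in> E" for w
  proof -
    have "{fst (parent_edge w), mult_gen (fst (parent_edge w)) (snd (parent_edge w))} \<subseteq> V"
      using ends[of "fst (parent_edge w)" "snd (parent_edge w)"] that(3) by simp
    then show ?thesis unfolding parent_edge_ends[OF that(1,2)] by simp
  qed
  have parent_in_E: "parent_edge w \<in> E" if "w \<in> V" "w \<noteq> []" for w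
    using reachable_imp_parent_edges[OF E, of w w] assms that by (auto simp: munn_tree_def)
  have "finite V" "[] \<in> V" using assms by (simp_all add: munn_tree_def)
  then show "rooted_subtree X V"
    unfolding rooted_subtree_def using V ends_parent parent_in_E by blast
  have "E \<subseteq> parent_edge ` (V - {[]})"
  proof
    fix e assume "e \<in> E"
    moreover obtain w where "w \<in> FG X" "w \<noteq> []" "parent_edge w = e"
      using cayley_edge_eq_parent_edge[of "fst e" "snd e" X] E \<open>e \<in> E\<close> by auto
    ultimately show "e \<in> parent_edge ` (V - {[]})" using ends_parent by blast
  qed
  then show "E = parent_edge ` (V - {[]})" using parent_in_E by blast
qed

lemma rooted_subtree_imp_munn_tree:
  assumes "rooted_subtree X V"
  shows "munn_tree X V (parent_edge ` (V - {[]}))"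
proof -
  have V: "V \<subseteq> FG X" using assms by (simp add: rooted_subtree_def)
  let ?E = "parent_edge ` (V - {[]})"
  have reach: "([], v) \<in> {(u, w). adj ?E u w}\<^sup>*" if "v \<in> V" for v
    using that
  proof (induction v rule: rev_induct)
    case (snoc l v)
    then have "v \<in> V" using rooted_subtree_prefix[OF assms] by simp
    moreover have "adj ?E v (v @ [l])" using adj_parent_edge[of "v @ [l]" X ?E] snoc.prems V by auto
    ultimately show ?case using snoc.IH by (simp add: rtrancl.rtrancl_into_rtrancl)
  qed simp
  have ends: "h \<in> V \<and> mult_gen h x \<in> V" if hx: "(h, x) \<in> ?E" for h x
  proof -
    obtain w where w: "w \<in> V" "w \<noteq> []" "parent_edge w = (h, x)" using hx by force
    have "{butlast w, w} \<subseteq> V" using w assms by (simp add: rooted_subtree_def)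
    moreover have "{h, mult_gen h x} = {butlast w, w}"
      using parent_edge_ends[OF subsetD[OF V w(1)] w(2)] w(3) by simp
    ultimately have "{h, mult_gen h x} \<subseteq> V" by (simp only:)
    then show ?thesis by simp
  qed
  show ?thesis
    unfolding munn_tree_def
  proof (intro conjI)
    show "?E \<subseteq> cayley_edges X" using parent_edge_in_cayley_edges V by blast
    show "finite V" "finite ?E" "[] \<in> V" using assms by (simp_all add: rooted_subtree_def)
  qed (use V ends reach in blast)+
qed

lemma munn_tree_iff: "munn_tree X V E \<longleftrightarrow> rooted_subtree X V \<and> E = parent_edge ` (V - {[]})"
  using munn_tree_imp_rooted_subtree rooted_subtree_imp_munn_tree by blast

section \<open>Counting forests\<close>

definition prefix_free :: "'a list set \<Rightarrow> bool" where
  "prefix_free S \<longleftrightarrow> (\<forall>s\<in>S. \<forall>s'\<in>S. prefix s s' \<longrightarrow> s = s')"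

definition children :: "'a set \<Rightarrow> 'a fg_word \<Rightarrow> 'a fg_word set" where
  "children X u = {w \<in> FG X. w \<noteq> [] \<and> butlast w = u}"

definition forest :: "'a set \<Rightarrow> 'a fg_word set \<Rightarrow> 'a fg_word set \<Rightarrow> bool" where
  "forest X S W \<longleftrightarrow>
     finite W \<and> W \<subseteq> FG X \<and> (\<forall>w\<in>W. w \<in> S \<or> (w \<noteq> [] \<and> butlast w \<in> W))"

lemma children_snoc: "w \<in> children X u \<Longrightarrow> \<exists>l. w = u @ [l]"
  unfolding children_def by (metis (mono_tags, lifting) append_butlast_last_id mem_Collect_eq)

lemma length_children: "w \<in> children X u \<Longrightarrow> length w = Suc (length u)"
  unfolding children_def by (cases w rule: rev_cases) auto

lemma children_eq_image:
  assumes "u \<in> FG X"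
  shows "children X u = (\<lambda>l. u @ [l]) `
           (X \<times> UNIV - (if u = [] then {} else {(fst (last u), \<not> snd (last u))}))"
proof -
  have "children X u = (\<lambda>l. u @ [l]) ` {l. u @ [l] \<in> FG X}"
  proof (intro set_eqI iffI)
    fix w assume "w \<in> children X u"
    then have w: "w \<in> FG X" "w \<noteq> []" "butlast w = u" unfolding children_def by auto
    then have "w = u @ [last w]" using append_butlast_last_id[of w] by simp
    then show "w \<in> (\<lambda>l. u @ [l]) ` {l. u @ [l] \<in> FG X}" using w(1) by (metis image_eqI mem_Collect_eq)
  qed (auto simp: children_def)
  also have "{l. u @ [l] \<in> FG X} = X \<times> UNIV - (if u = [] then {} else {(fst (last u), \<not> snd (last u))})"
    using assms by (intro set_eqI, case_tac x) (auto simp: FG_def reduced_snoc)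
  finally show ?thesis .
qed

lemma card_children:
  assumes "finite X" "u \<in> FG X"
  shows "finite (children X u)" "card (children X u) = (if u = [] then 2 * card X else 2 * card X - 1)"
proof -
  let ?L = "X \<times> (UNIV :: bool set) - (if u = [] then {} else {(fst (last u), \<not> snd (last u))})"
  have inj: "inj_on (\<lambda>l. u @ [l]) ?L" by (rule inj_onI) simp
  have XU: "finite (X \<times> (UNIV :: bool set))" "card (X \<times> (UNIV :: bool set)) = 2 * card X"
    using assms(1) by (simp_all add: card_cartesian_product)
  have "(fst (last u), \<not> snd (last u)) \<in> X \<times> UNIV" if "u \<noteq> []"
    using assms(2) that by (auto simp: FG_def)
  then have "finite ?L \<and> card ?L = (if u = [] then 2 * card X else 2 * card X - 1)"
    using XU by (simp add: card_Diff_singleton)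
  then show "finite (children X u)" "card (children X u) = (if u = [] then 2 * card X else 2 * card X - 1)"
    unfolding children_eq_image[OF assms(2)] card_image[OF inj] by simp_all
qed

lemma forest_root: "forest X S W \<Longrightarrow> w \<in> W \<Longrightarrow> \<exists>s\<in>S. prefix s w"
proof (induction w rule: rev_induct)
  case (snoc l v)
  show ?case
  proof (cases "v @ [l] \<in> S")
    case False
    then have "v \<in> W" using snoc.prems unfolding forest_def by fastforce
    then show ?thesis using snoc by (meson prefix_snoc)
  qed blast
qed (auto simp: forest_def)

lemma forest_Diff_root:
  assumes "prefix_free S" "s \<in> S" "forest X (S - {s}) W"
  shows "s \<notin> W" "forest X S W"
proof
  assume "s \<in> W"
  then have "s \<noteq> [] \<and> butlast s \<in> W" using assms(3) unfolding forest_def by blast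
  then obtain s' where "s' \<in> S - {s}" "prefix s' (butlast s)" using forest_root[OF assms(3)] by blast
  then show False
    using assms(1,2) prefixeq_butlast[of s] prefix_order.trans unfolding prefix_free_def by blast
next
  show "forest X S W" using assms(3) unfolding forest_def by blast
qed

lemma forest_remove_root:
  assumes "forest X S W" "s \<in> W"
  shows "forest X (S - {s} \<union> children X s) (W - {s})"
  unfolding forest_def
proof (intro conjI ballI)
  fix w assume "w \<in> W - {s}"
  then show "w \<in> S - {s} \<union> children X s \<or> w \<noteq> [] \<and> butlast w \<in> W - {s}"
    using assms(1) unfolding forest_def children_def by auto
qed (use assms in \<open>auto simp: forest_def\<close>)

lemma forest_insert_root:
  assumes "prefix_free S" "s \<in> S" "S \<subseteq> FG X" "forest X (S - {s} \<union> children X s) W"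
  shows "s \<notin> W" "forest X S (insert s W)"
proof
  assume "s \<in> W"
  then obtain s' where s': "s' \<in> S - {s} \<union> children X s" "prefix s' s"
    using forest_root[OF assms(4)] by blast
  show False
  proof (cases "s' \<in> children X s")
    case True
    then show False using prefix_length_le[OF s'(2)] length_children by fastforce
  next
    case False
    then show False using s' assms(1,2) unfolding prefix_free_def by blast
  qed
next
  show "forest X S (insert s W)"
    using assms unfolding forest_def children_def by auto
qed

lemma prefix_free_replace_root:
  assumes "prefix_free S" "s \<in> S"
  shows "prefix_free (S - {s} \<union> children X s)"
  unfolding prefix_free_def
proof (intro ballI impI)
  fix s1 s2 assume s1: "s1 \<in> S - {s} \<union> children X s" and s2: "s2 \<in> S - {s} \<union> children X s"
    and p: "prefix s1 s2"
  have S: "s' = s''" if "s' \<in> S" "s'' \<in> S" "prefix s' s''" for s' s''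
    using assms(1) that unfolding prefix_free_def by blast
  show "s1 = s2"
  proof (cases "s2 \<in> children X s")
    case True
    then obtain l2 where l2: "s2 = s @ [l2]" using children_snoc by blast
    then have "s1 = s2 \<or> prefix s1 s" using p by simp
    moreover have "\<not> prefix s1 s"
    proof
      assume "prefix s1 s"
      moreover have "s1 \<notin> children X s" using prefix_length_le[OF \<open>prefix s1 s\<close>] length_children
        by fastforce
      ultimately show False using S[of s1 s] s1 assms(2) by blast
    qed
    ultimately show ?thesis by blast
  next
    case False
    then have "s2 \<in> S" "s2 \<noteq> s" using s2 by auto
    show ?thesis
    proof (cases "s1 \<in> children X s")
      case True
      then obtain l1 where "s1 = s @ [l1]" using children_snoc by blast
      then have "prefix s s2" using p prefix_order.trans[of s s1 s2] by simp
      then show ?thesis using S[of s s2] \<open>s2 \<in> S\<close> \<open>s2 \<noteq> s\<close> assms(2) by blast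
    next
      case False
      then show ?thesis using S[of s1 s2] s1 \<open>s2 \<in> S\<close> p by blast
    qed
  qed
qed

lemma forests_split:
  assumes "prefix_free S" "s \<in> S" "S \<subseteq> FG X"
  shows "{W. forest X S W \<and> card W = Suc k}
    = {W. forest X (S - {s}) W \<and> card W = Suc k}
      \<union> insert s ` {W. forest X (S - {s} \<union> children X s) W \<and> card W = k}"
    (is "?L = ?A \<union> insert s ` ?B")
proof (intro set_eqI iffI)
  fix W assume W: "W \<in> ?L"
  show "W \<in> ?A \<union> insert s ` ?B"
  proof (cases "s \<in> W")
    case True
    have "finite W" using W by (simp add: forest_def)
    then have "W - {s} \<in> ?B" using forest_remove_root[of X S W s] W True by simp
    moreover have "W = insert s (W - {s})" using True by blast
    ultimately show ?thesis by (blast intro: image_eqI)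
  next
    case False
    then have "W \<in> ?A" using W unfolding forest_def by blast
    then show ?thesis by blast
  qed
next
  fix W assume "W \<in> ?A \<union> insert s ` ?B"
  then show "W \<in> ?L"
  proof
    assume "W \<in> ?A"
    then show ?thesis using forest_Diff_root(2)[OF assms(1,2)] by blast
  next
    assume "W \<in> insert s ` ?B"
    then obtain W' where W': "W = insert s W'" "forest X (S - {s} \<union> children X s) W'" "card W' = k"
      by blast
    moreover have "finite W'" using W'(2) by (simp add: forest_def)
    ultimately show ?thesis using forest_insert_root[OF assms] by simp
  qed
qed

lemma card_forests:
  assumes "finite X"
  shows "p = 2 * card X - 1 \<Longrightarrow> card S = q \<Longrightarrow> finite S \<Longrightarrow> S \<subseteq> FG X - {[]} \<Longrightarrow>
    prefix_free S \<Longrightarrow>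
    finite {W. forest X S W \<and> card W = k} \<and> card {W. forest X S W \<and> card W = k} = forest_number p q k"
proof (induction p q k arbitrary: S rule: forest_number.induct)
  case (1 p q)
  have empty: "{W. forest X S W \<and> card W = 0} = {{}}" by (auto simp: forest_def)
  show ?case unfolding empty by simp
next
  case (2 p k)
  then have "W = {}" if "forest X S W" for W using forest_root[OF that] by auto
  then have none: "{W. forest X S W \<and> card W = Suc k} = {}" by fastforce
  show ?case unfolding none by simp
next
  case (3 p q k)
  obtain s where s: "s \<in> S" using "3.prems"(2) by fastforce
  define S' where "S' = S - {s} \<union> children X s"
  define A where "A = {W. forest X (S - {s}) W \<and> card W = Suc k}"
  define B where "B = {W. forest X S' W \<and> card W = k}"
  have "s \<in> FG X" "s \<noteq> []" using s "3.prems"(4) by auto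
  then have ch: "finite (children X s)" "card (children X s) = p"
    using card_children[OF assms] "3.prems"(1) by auto
  have "(S - {s}) \<inter> children X s = {}"
    using s "3.prems"(5) children_snoc unfolding prefix_free_def by fastforce
  then have "card S' = q + p" unfolding S'_def using "3.prems"(2,3) s ch by (simp add: card_Un_disjoint)
  moreover have "S' \<subseteq> FG X - {[]}" using "3.prems"(4) by (auto simp: S'_def children_def)
  moreover have "prefix_free S'" unfolding S'_def by (rule prefix_free_replace_root[OF "3.prems"(5) s])
  moreover have "finite S'" using "3.prems"(3) ch(1) by (simp add: S'_def)
  ultimately have B: "finite B \<and> card B = forest_number p (q + p) k"
    unfolding B_def using "3.IH"(2)[OF "3.prems"(1)] by blast
  have "card (S - {s}) = q" "finite (S - {s})" "S - {s} \<subseteq> FG X - {[]}" "prefix_free (S - {s})"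
    using "3.prems" s unfolding prefix_free_def by auto
  then have A: "finite A \<and> card A = forest_number p q (Suc k)"
    unfolding A_def by (rule "3.IH"(1)[OF "3.prems"(1)])
  have "s \<notin> W" if "W \<in> A" for W using forest_Diff_root[OF "3.prems"(5) s] that unfolding A_def by blast
  then have disjoint: "A \<inter> insert s ` B = {}" by blast
  have "s \<notin> W" if "W \<in> B" for W
    using forest_insert_root[OF "3.prems"(5) s] "3.prems"(4) that unfolding B_def S'_def by blast
  then have inj: "inj_on (insert s) B" by (meson inj_onI insert_ident)
  have split: "{W. forest X S W \<and> card W = Suc k} = A \<union> insert s ` B"
    unfolding A_def B_def S'_def by (rule forests_split[OF "3.prems"(5) s]) (use "3.prems"(4) in blast)
  show ?case
    unfolding split using A B disjoint by (simp add: card_Un_disjoint card_image[OF inj])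
qed

section \<open>Branches hanging off the trunk\<close>

lemma trunk_edges_eq: "trunk_edges g = parent_edge ` (set (prefixes g) - {[]})"
proof -
  have prefixes: "set (prefixes g) - {[]} = (\<lambda>i. take (Suc i) g) ` {..<length g}"
  proof (intro set_eqI iffI)
    fix u assume "u \<in> set (prefixes g) - {[]}"
    then obtain zs where "g = u @ zs" "u \<noteq> []" by (auto simp: prefix_def)
    then have "u = take (Suc (length u - 1)) g" "length u - 1 < length g" by (cases u; simp)+
    then show "u \<in> (\<lambda>i. take (Suc i) g) ` {..<length g}" by blast
  qed (auto simp: take_is_prefix)
  have "(if snd (g ! i) then (take i g, fst (g ! i)) else (take (Suc i) g, fst (g ! i)))
      = parent_edge (take (Suc i) g)"
    if "i < length g" for i
    using that by (simp add: parent_edge_def take_Suc_conv_app_nth)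
  then show ?thesis unfolding trunk_edges_def prefixes image_image by (rule image_cong[OF refl]) simp
qed

lemma card_parent_edges_Diff:
  assumes "P \<subseteq> V" "V \<subseteq> FG X" "[] \<in> P"
  shows "card (parent_edge ` (V - {[]}) - parent_edge ` (P - {[]})) = card (V - P)"
proof -
  have "parent_edge ` (V - {[]}) - parent_edge ` (P - {[]}) = parent_edge ` ((V - {[]}) - (P - {[]}))"
    by (rule inj_on_image_set_diff[OF inj_on_parent_edge, symmetric]) (use assms in auto)
  also have "(V - {[]}) - (P - {[]}) = V - P" using assms(3) by auto
  moreover have "V - P \<subseteq> FG X - {[]}" using assms by auto
  ultimately show ?thesis using card_image[OF inj_on_subset[OF inj_on_parent_edge]] by simp
qed

definition branch_roots :: "'a set \<Rightarrow> 'a fg_word \<Rightarrow> 'a fg_word set" where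
  "branch_roots X g = (\<Union>u\<in>set (prefixes g). children X u) - set (prefixes g)"

lemma branch_roots_subset: "branch_roots X g \<subseteq> FG X - {[]}"
  by (auto simp: branch_roots_def children_def)

lemma prefix_free_branch_roots: "prefix_free (branch_roots X g)"
  unfolding prefix_free_def
proof (intro ballI impI)
  fix s1 s2 assume s1: "s1 \<in> branch_roots X g" and s2: "s2 \<in> branch_roots X g" and "prefix s1 s2"
  obtain u where u: "prefix u g" "s2 \<in> children X u" using s2 by (auto simp: branch_roots_def)
  obtain l where "s2 = u @ [l]" using children_snoc[OF u(2)] by blast
  then have "s1 = s2 \<or> prefix s1 u" using \<open>prefix s1 s2\<close> by simp
  moreover have "\<not> prefix s1 g" using s1 by (simp add: branch_roots_def)
  ultimately show "s1 = s2" using prefix_order.trans[OF _ u(1), of s1] by blast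
qed

lemma card_branch_roots:
  assumes "finite X" "g \<in> FG X"
  shows "finite (branch_roots X g)" "card (branch_roots X g) = 2 * card X + length g * (2 * card X - 2)"
proof -
  let ?P = "set (prefixes g)"
  let ?U = "\<Union>u\<in>?P. children X u"
  have PF: "?P \<subseteq> FG X" using FG_prefix[OF assms(2)] by auto
  have ch: "finite (children X u)" "card (children X u) = (if u = [] then 2 * card X else 2 * card X - 1)"
    if "u \<in> ?P" for u
    using card_children[OF assms(1)] PF that by blast+
  then show "finite (branch_roots X g)" unfolding branch_roots_def by auto
  have "card ?U = (\<Sum>u\<in>?P. card (children X u))"
    by (rule card_UN_disjoint) (use ch in \<open>auto simp: children_def\<close>)
  also have "\<dots> = card (children X []) + (\<Sum>u\<in>?P - {[]}. card (children X u))"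
    by (rule sum.remove) simp_all
  also have "\<dots> = 2 * card X + length g * (2 * card X - 1)"
    using ch by simp
  finally have U: "card ?U = 2 * card X + length g * (2 * card X - 1)" .
  have "?U \<inter> ?P = ?P - {[]}"
  proof (intro set_eqI iffI)
    fix w assume w: "w \<in> ?P - {[]}"
    then have "butlast w \<in> ?P" using prefixeq_butlast prefix_order.trans by auto
    moreover have "w \<in> children X (butlast w)" using w PF by (auto simp: children_def)
    ultimately show "w \<in> ?U \<inter> ?P" using w by blast
  qed (auto simp: children_def)
  then have "card (?U \<inter> ?P) = length g" by simp
  then have "card (branch_roots X g) = 2 * card X + length g * (2 * card X - 1) - length g"
    unfolding branch_roots_def using U by (simp add: card_Diff_subset_Int)
  also have "\<dots> = 2 * card X + length g * (2 * card X - 2)"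
    by (cases "card X") (simp_all add: algebra_simps)
  finally show "card (branch_roots X g) = 2 * card X + length g * (2 * card X - 2)" .
qed

lemma card_rooted_subtrees_eq_card_forests:
  assumes "g \<in> FG X"
  shows "card {V. rooted_subtree X V \<and> set (prefixes g) \<subseteq> V \<and> card (V - set (prefixes g)) = k}
       = card {W. forest X (branch_roots X g) W \<and> card W = k}"
proof -
  let ?P = "set (prefixes g)" and ?R = "branch_roots X g"
  have PF: "?P \<subseteq> FG X" using FG_prefix[OF assms] by auto
  have P_butlast: "butlast u \<in> ?P" if "u \<in> ?P" for u
    using that prefixeq_butlast prefix_order.trans by auto
  have forest: "forest X ?R (V - ?P)" if V: "rooted_subtree X V" for V
    unfolding forest_def
  proof (intro conjI ballI)
    fix w assume w: "w \<in> V - ?P"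
    then have "w \<noteq> []" "butlast w \<in> V" "w \<in> FG X" using V by (auto simp: rooted_subtree_def)
    then show "w \<in> ?R \<or> w \<noteq> [] \<and> butlast w \<in> V - ?P"
      using w unfolding branch_roots_def children_def by blast
  qed (use V in \<open>auto simp: rooted_subtree_def\<close>)
  have off_trunk: "(?P \<union> W) - ?P = W" if W: "forest X ?R W" for W
  proof -
    have "\<not> prefix w g" if "w \<in> W" for w
    proof
      assume "prefix w g"
      obtain s where "s \<in> ?R" "prefix s w" using forest_root[OF W \<open>w \<in> W\<close>] by blast
      then show False using \<open>prefix w g\<close> prefix_order.trans[of s w g] by (simp add: branch_roots_def)
    qed
    then show ?thesis by auto
  qed
  have subtree: "rooted_subtree X (?P \<union> W)" if W: "forest X ?R W" for W
    unfolding rooted_subtree_def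
  proof (intro conjI ballI impI)
    fix w assume w: "w \<in> ?P \<union> W" "w \<noteq> []"
    have "butlast w \<in> ?P" if "w \<in> ?R" using that unfolding branch_roots_def children_def by auto
    then show "butlast w \<in> ?P \<union> W" using w W P_butlast unfolding forest_def by blast
  qed (use W PF in \<open>auto simp: forest_def\<close>)
  have "bij_betw (\<lambda>V. V - ?P) {V. rooted_subtree X V \<and> ?P \<subseteq> V \<and> card (V - ?P) = k}
      {W. forest X ?R W \<and> card W = k}"
  proof (rule bij_betw_byWitness[where f' = "\<lambda>W. ?P \<union> W"])
    show "(\<lambda>W. ?P \<union> W) ` {W. forest X ?R W \<and> card W = k}
        \<subseteq> {V. rooted_subtree X V \<and> ?P \<subseteq> V \<and> card (V - ?P) = k}"
    proof clarify
      fix W assume "forest X ?R W"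
      then show "rooted_subtree X (?P \<union> W) \<and> ?P \<subseteq> ?P \<union> W \<and> card (?P \<union> W - ?P) = card W"
        using subtree off_trunk by simp
    qed
  qed (use forest off_trunk in auto)
  then show ?thesis by (rule bij_betw_same_card)
qed

lemma munn_trees_containing_eq_image:
  assumes "g \<in> FG X"
  shows "{(V, E). munn_tree X V E \<and> g \<in> V \<and> card (E - trunk_edges g) = k}
     = (\<lambda>V. (V, parent_edge ` (V - {[]})))
         ` {V. rooted_subtree X V \<and> set (prefixes g) \<subseteq> V \<and> card (V - set (prefixes g)) = k}"
    (is "?L = ?f ` ?R")
proof -
  let ?P = "set (prefixes g)"
  have trunk: "g \<in> V \<and> card (parent_edge ` (V - {[]}) - trunk_edges g) = k \<longleftrightarrow> V \<in> ?R"
    if V: "rooted_subtree X V" for V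
  proof -
    have "g \<in> V \<longleftrightarrow> ?P \<subseteq> V" using rooted_subtree_prefix[OF V] by auto
    moreover have "card (parent_edge ` (V - {[]}) - trunk_edges g) = card (V - ?P)" if "?P \<subseteq> V"
      unfolding trunk_edges_eq using V that by (intro card_parent_edges_Diff) (auto simp: rooted_subtree_def)
    ultimately show ?thesis using V by auto
  qed
  show ?thesis
  proof (intro set_eqI iffI)
    fix x assume "x \<in> ?L"
    then obtain V E where "x = (V, E)" "munn_tree X V E" "g \<in> V" "card (E - trunk_edges g) = k" by blast
    then show "x \<in> ?f ` ?R" unfolding munn_tree_iff using trunk by blast
  next
    fix x assume "x \<in> ?f ` ?R"
    then obtain V where "x = ?f V" "V \<in> ?R" by blast
    then show "x \<in> ?L" using munn_tree_iff[of X V] trunk[of V] by simp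
  qed
qed

theorem mainTheorem3:
  fixes X :: "'a set" and g :: "'a fg_word" and t k :: nat
  assumes "finite X" and "X \<noteq> {}"
    and "g \<in> FG X" and "length g = t"
  shows "real (card {(V, E). munn_tree X V E \<and> g \<in> V \<and> card (E - trunk_edges g) = k})
         = fuss_catalan (2 * card X - 1)
             (nat (2 * (2 * int (card X) - 1) + (int t - 1) * ((2 * int (card X) - 1) - 1))) k"
proof -
  let ?P = "set (prefixes g)" and ?R = "branch_roots X g"
  have "card {(V, E). munn_tree X V E \<and> g \<in> V \<and> card (E - trunk_edges g) = k}
      = card {V. rooted_subtree X V \<and> ?P \<subseteq> V \<and> card (V - ?P) = k}"
    unfolding munn_trees_containing_eq_image[OF assms(3)] by (rule card_image) (rule inj_onI, simp)
  also have "\<dots> = card {W. forest X ?R W \<and> card W = k}"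
    by (rule card_rooted_subtrees_eq_card_forests[OF assms(3)])
  also have "\<dots> = forest_number (2 * card X - 1) (card ?R) k"
    using card_forests[OF assms(1) refl refl card_branch_roots(1)[OF assms(1,3)] branch_roots_subset
        prefix_free_branch_roots]
    by (rule conjunct2)
  finally have count: "card {(V, E). munn_tree X V E \<and> g \<in> V \<and> card (E - trunk_edges g) = k}
      = forest_number (2 * card X - 1) (card ?R) k" .
  obtain c where c: "card X = Suc c" using assms(1,2) by (cases "card X") auto
  have R: "card ?R = 2 * Suc c + t * (2 * c)"
    using card_branch_roots(2)[OF assms(1,3)] assms(4) c by simp
  have "2 * (2 * int (card X) - 1) + (int t - 1) * ((2 * int (card X) - 1) - 1) = int (card ?R)"
    unfolding R c by (simp add: algebra_simps)
  then have q: "nat (2 * (2 * int (card X) - 1) + (int t - 1) * ((2 * int (card X) - 1) - 1)) = card ?R"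
    by (simp only: nat_int)
  show ?thesis
    unfolding count q using forest_number_eq_fuss_catalan[of "2 * card X - 1" "card ?R" k] R c by simp
qed

end
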